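(* Let $A=(a_{i,j})$ be an $n\times n$ matrix with entries in an associative (not necessarily commutative) algebra and fix $1\le j\le n$. If the column determinant of every left $j$-minor of $A$ is zero, then $\mathrm{cdet}A=0$.
   Context: For an $m\times m$ matrix $B=(b_{i,k})$ over an associative algebra, its column determinant is $\mathrm{cdet}B:=\sum_{w\in S_m}\mathrm{sgn}(w)b_{w1,1}b_{w2,2}\cdots b_{wm,m}$. A left $j$-minor of $A$ is a $j\times j$ submatrix $(a_{i_p,q})_{1\le p,q\le j}$ for some $1\le i_1<i_2<\cdots<i_j\le n$ (rows $i_1,\dots,i_j$, columns $1,\dots,j$). *)

theory Defs
  imports "HOL-Combinatorics.Permutations"
begin

text \<open>Matrices are functions nat => nat => 'a, indexed from 1 (rows i, columns k).\<close>

definition cdet :: "nat \<Rightarrow> (nat \<Rightarrow> nat \<Rightarrow> 'a::ring_1) \<Rightarrow> 'a" where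
  "cdet m B = (\<Sum>w | w permutes {1..m}.
      of_int (sign w) * prod_list (map (\<lambda>k. B (w k) k) [1..<m+1]))"

definition left_minor :: "(nat \<Rightarrow> nat \<Rightarrow> 'a) \<Rightarrow> (nat \<Rightarrow> nat) \<Rightarrow> nat \<Rightarrow> nat \<Rightarrow> 'a" where
  "left_minor A i = (\<lambda>p q. A (i p) q)"

definition row_selection :: "nat \<Rightarrow> nat \<Rightarrow> (nat \<Rightarrow> nat) \<Rightarrow> bool" where
  "row_selection n j i \<longleftrightarrow> (\<forall>p\<in>{1..j}. i p \<in> {1..n}) \<and>
      (\<forall>p q. 1 \<le> p \<longrightarrow> p < q \<longrightarrow> q \<le> j \<longrightarrow> i p < i q)"

end

theory Submission
  imports Defs
begin

text \<open>Group the permutations of \<open>{1..n}\<close> into the left cosets \<open>w\<^sub>0 S\<^sub>j\<close> of the subgroup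
  \<open>S\<^sub>j\<close> permuting \<open>{1..j}\<close>, taking as representative the \<open>w\<^sub>0\<close> that is increasing on \<open>{1..j}\<close>.
  In a column determinant the factors are ordered by column, so the entries from the first \<open>j\<close>
  columns stand leftmost; summing over one coset therefore yields
  \<open>sgn w\<^sub>0 \<cdot> cdet (left minor on rows w\<^sub>0 1 < \<dots> < w\<^sub>0 j) \<cdot> (product over the remaining columns)\<close>,
  and every such minor vanishes by hypothesis.\<close>

lemma strict_mono_on_eq_if_image_eq:
  fixes f g :: "'a::linorder \<Rightarrow> 'b::linorder"
  assumes "finite A" and "strict_mono_on A f" and "strict_mono_on A g"
    and "f ` A = g ` A" and "x \<in> A"
  shows "f x = g x"
proof -
  let ?xs = "sorted_list_of_set A"
  have sorted: "sorted_wrt (<) (map h ?xs)" if "strict_mono_on A h" for h :: "'a \<Rightarrow> 'b"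
    unfolding sorted_wrt_map
    by (rule sorted_wrt_mono_rel[OF _ sorted_list_of_set.strict_sorted_key_list_of_set])
      (use that assms(1) in \<open>auto dest: strict_mono_onD\<close>)
  have "map f ?xs = map g ?xs"
    using sorted[OF assms(2)] sorted[OF assms(3)] assms(1,4)
    by (intro sorted_distinct_set_unique) (auto simp: strict_sorted_iff)
  then show ?thesis
    using assms(1,5) by (simp add: map_eq_conv)
qed

lemma strict_mono_enumeration_exists:
  fixes S :: "'a::linorder set"
  assumes "finite S"
  shows "\<exists>e. strict_mono_on {1..card S} e \<and> e ` {1..card S} = S"
proof -
  let ?xs = "sorted_list_of_set S"
  define e where "e p = ?xs ! (p - 1)" for p
  have "strict_mono_on {1..card S} e"
    using sorted_list_of_set.strict_sorted_key_list_of_set[of S] assms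
    by (auto intro!: strict_mono_onI simp: e_def sorted_wrt_iff_nth_less)
  moreover have "e ` {1..card S} = S"
  proof -
    have "e ` {1..card S} = (!) ?xs ` {..<card S}"
      by (force simp: e_def image_iff Bex_def)
    also have "\<dots> = set ?xs"
      using assms by (auto simp: set_conv_nth)
    finally show ?thesis
      using assms by simp
  qed
  ultimately show ?thesis by blast
qed

definition prefix_sorted_perms :: "nat \<Rightarrow> nat \<Rightarrow> (nat \<Rightarrow> nat) set" where
  "prefix_sorted_perms n j = {w. w permutes {1..n} \<and> strict_mono_on {1..j} w}"

lemma permutes_factor_prefix_sorted:
  assumes w: "w permutes {1..n}" and "j \<le> n"
  obtains w0 \<pi> where "w0 \<in> prefix_sorted_perms n j" and "\<pi> permutes {1..j}" and "w = w0 \<circ> \<pi>"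
proof -
  have inj: "inj_on w {1..j}"
    using permutes_inj_on[OF w] .
  then obtain e where e: "strict_mono_on {1..j} e" "e ` {1..j} = w ` {1..j}"
    using strict_mono_enumeration_exists[of "w ` {1..j}"] by (auto simp: card_image)
  then have bij_e: "bij_betw e {1..j} (w ` {1..j})"
    by (simp add: bij_betw_def strict_mono_on_imp_inj_on)
  define \<pi> where "\<pi> k = (if k \<in> {1..j} then inv_into {1..j} e (w k) else k)" for k
  have "bij_betw (inv_into {1..j} e \<circ> w) {1..j} {1..j}"
    by (rule bij_betw_trans[OF inj_on_imp_bij_betw[OF inj] bij_betw_inv_into[OF bij_e]])
  then have "bij_betw \<pi> {1..j} {1..j}"
    by (rule bij_betw_cong[THEN iffD1, rotated]) (simp add: \<pi>_def)
  then have \<pi>: "\<pi> permutes {1..j}"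
    by (rule bij_imp_permutes) (auto simp: \<pi>_def)
  have e_\<pi>: "e (\<pi> k) = w k" if "k \<in> {1..j}" for k
    using that e(2) by (simp add: \<pi>_def f_inv_into_f)
  define w0 where "w0 = w \<circ> inv \<pi>"
  have "w = w0 \<circ> \<pi>"
    by (simp add: w0_def comp_assoc permutes_inv_o(2)[OF \<pi>])
  moreover have "w0 permutes {1..n}"
    using w permutes_inv[OF \<pi>] permutes_subset assms(2) unfolding w0_def
    by (metis atLeastatMost_subset_iff order_refl permutes_compose)
  moreover have "w0 p = e p" if "p \<in> {1..j}" for p
    using e_\<pi>[of "inv \<pi> p"] permutes_in_image[OF permutes_inv[OF \<pi>]] that
    by (simp add: w0_def permutes_inverses(1)[OF \<pi>])
  then have "strict_mono_on {1..j} w0"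
    using e(1) by (simp add: strict_mono_on_def)
  ultimately show thesis
    using that \<pi> by (simp add: prefix_sorted_perms_def)
qed

lemma prefix_sorted_factor_unique:
  assumes "w0 \<in> prefix_sorted_perms n j" "\<pi> permutes {1..j}"
    and "w1 \<in> prefix_sorted_perms n j" "\<sigma> permutes {1..j}"
    and eq: "w0 \<circ> \<pi> = w1 \<circ> \<sigma>"
  shows "w0 = w1" and "\<pi> = \<sigma>"
proof -
  have "w0 ` {1..j} = w0 ` \<pi> ` {1..j}"
    using permutes_image[OF assms(2)] by simp
  also have "\<dots> = w1 ` \<sigma> ` {1..j}"
    using eq by (simp add: image_comp)
  also have "\<dots> = w1 ` {1..j}"
    using permutes_image[OF assms(4)] by simp
  finally have "w0 k = w1 k" if "k \<in> {1..j}" for k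
    using assms(1,3) that by (intro strict_mono_on_eq_if_image_eq) (auto simp: prefix_sorted_perms_def)
  moreover have "w0 k = w1 k" if "k \<notin> {1..j}" for k
    using fun_cong[OF eq, of k] that assms(2,4) by (simp add: permutes_not_in)
  ultimately show "w0 = w1"
    by blast
  moreover have "inj w1"
    using assms(3) by (auto simp: prefix_sorted_perms_def dest: permutes_inj)
  ultimately show "\<pi> = \<sigma>"
    using eq by (auto simp: fun_eq_iff dest: injD)
qed

lemma bij_betw_compose_prefix_sorted:
  assumes "j \<le> n"
  shows "bij_betw (\<lambda>(w0, \<pi>). w0 \<circ> \<pi>)
    (prefix_sorted_perms n j \<times> {\<pi>. \<pi> permutes {1..j}}) {w. w permutes {1..n}}"
proof (rule bij_betw_imageI)
  show "inj_on (\<lambda>(w0, \<pi>). w0 \<circ> \<pi>) (prefix_sorted_perms n j \<times> {\<pi>. \<pi> permutes {1..j}})"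
    by (auto intro!: inj_onI dest: prefix_sorted_factor_unique)
  have "\<pi> permutes {1..n}" if "\<pi> permutes {1..j}" for \<pi>
    using that assms by (auto intro: permutes_subset)
  then show "(\<lambda>(w0, \<pi>). w0 \<circ> \<pi>) ` (prefix_sorted_perms n j \<times> {\<pi>. \<pi> permutes {1..j}})
      = {w. w permutes {1..n}}"
    using assms by (fastforce simp: prefix_sorted_perms_def permutes_compose
        elim: permutes_factor_prefix_sorted)
qed

lemma signed_diagonal_product_compose:
  fixes A :: "nat \<Rightarrow> nat \<Rightarrow> 'a::ring_1"
  assumes w0: "w0 permutes {1..n}" and \<pi>: "\<pi> permutes {1..j}" and "j \<le> n"
  shows "of_int (sign (w0 \<circ> \<pi>)) * prod_list (map (\<lambda>k. A ((w0 \<circ> \<pi>) k) k) [1..<n+1])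
    = of_int (sign w0)
      * (of_int (sign \<pi>) * prod_list (map (\<lambda>k. left_minor A w0 (\<pi> k) k) [1..<j+1]))
      * prod_list (map (\<lambda>k. A (w0 k) k) [j+1..<n+1])"
proof -
  have split: "[1..<n+1] = [1..<j+1] @ [j+1..<n+1]"
    using upt_add_eq_append[of 1 "j+1" "n-j"] assms(3) by (simp del: upt_Suc)
  have tail: "map (\<lambda>k. A ((w0 \<circ> \<pi>) k) k) [j+1..<n+1] = map (\<lambda>k. A (w0 k) k) [j+1..<n+1]"
    using \<pi> by (auto simp: permutes_not_in)
  have sign: "sign (w0 \<circ> \<pi>) = sign w0 * sign \<pi>"
    using w0 \<pi> by (intro sign_compose) (auto simp: permutation_permutes)
  show ?thesis
    unfolding split map_append prod_list.append tail sign of_int_mult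
    by (simp del: upt_Suc add: left_minor_def mult.assoc)
qed

lemma cdet_expand_left_minors:
  fixes A :: "nat \<Rightarrow> nat \<Rightarrow> 'a::ring_1"
  assumes "j \<le> n"
  shows "cdet n A = (\<Sum>w0\<in>prefix_sorted_perms n j.
    of_int (sign w0) * cdet j (left_minor A w0) * prod_list (map (\<lambda>k. A (w0 k) k) [j+1..<n+1]))"
proof -
  let ?term = "\<lambda>w. of_int (sign w) * prod_list (map (\<lambda>k. A (w k) k) [1..<n+1])"
  have "cdet n A = (\<Sum>(w0, \<pi>) \<in> prefix_sorted_perms n j \<times> {\<pi>. \<pi> permutes {1..j}}. ?term (w0 \<circ> \<pi>))"
    unfolding cdet_def
    using sum.reindex_bij_betw[OF bij_betw_compose_prefix_sorted[OF assms], of ?term]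
    by (simp add: case_prod_unfold)
  also have "\<dots> = (\<Sum>w0\<in>prefix_sorted_perms n j. \<Sum>\<pi> | \<pi> permutes {1..j}. ?term (w0 \<circ> \<pi>))"
    by (simp add: sum.cartesian_product)
  also have "\<dots> = (\<Sum>w0\<in>prefix_sorted_perms n j.
    of_int (sign w0) * cdet j (left_minor A w0) * prod_list (map (\<lambda>k. A (w0 k) k) [j+1..<n+1]))"
  proof (rule sum.cong[OF refl])
    fix w0
    assume "w0 \<in> prefix_sorted_perms n j"
    then have "w0 permutes {1..n}"
      by (simp add: prefix_sorted_perms_def)
    with assms have "(\<Sum>\<pi> | \<pi> permutes {1..j}. ?term (w0 \<circ> \<pi>))
      = (\<Sum>\<pi> | \<pi> permutes {1..j}. of_int (sign w0)
          * (of_int (sign \<pi>) * prod_list (map (\<lambda>k. left_minor A w0 (\<pi> k) k) [1..<j+1]))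
          * prod_list (map (\<lambda>k. A (w0 k) k) [j+1..<n+1]))"
      by (intro sum.cong refl signed_diagonal_product_compose) simp_all
    then show "(\<Sum>\<pi> | \<pi> permutes {1..j}. ?term (w0 \<circ> \<pi>))
      = of_int (sign w0) * cdet j (left_minor A w0) * prod_list (map (\<lambda>k. A (w0 k) k) [j+1..<n+1])"
      by (simp del: upt_Suc add: cdet_def sum_distrib_left sum_distrib_right)
  qed
  finally show ?thesis .
qed

lemma row_selection_if_prefix_sorted:
  assumes "w0 \<in> prefix_sorted_perms n j" and "j \<le> n"
  shows "row_selection n j w0"
  using assms permutes_in_image
  by (fastforce simp: prefix_sorted_perms_def row_selection_def strict_mono_on_def)

theorem lemma2p1:
  fixes A :: "nat \<Rightarrow> nat \<Rightarrow> 'a::ring_1" and n j :: nat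
  assumes "1 \<le> j" and "j \<le> n"
    and "\<forall>i. row_selection n j i \<longrightarrow> cdet j (left_minor A i) = 0"
  shows "cdet n A = 0"
  using assms(2,3) row_selection_if_prefix_sorted
  by (simp add: cdet_expand_left_minors[OF assms(2)])

end
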